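(* If $X$ and $Y$ are homotopy equivalent spaces, then the subspaces $\mathbf{w}(X)$ and $\mathbf{w}(Y)$ are homotopy equivalent, and the subspaces $\mathbf{aw}(X)$ and $\mathbf{aw}(Y)$ are homotopy equivalent.
   Context: A loop is trivial if path-homotopic to a constant loop. A sequence of loops $\alpha_n$ based at $x$ is a null-sequence if every neighborhood of $x$ contains $\alpha_n([0,1])$ for all but finitely many $n$. $\mathbf{aw}(X)=\{x\in X\mid \text{there is a null-sequence of non-trivial loops based at }x\}$ (with subspace topology). $\mathbf{w}(X)$ is the subspace of points $x$ at which $X$ is not semilocally simply connected, i.e. every neighborhood of $x$ contains a loop based at $x$ that is non-trivial in $X$. *)

theory Defs
  imports "HOL-Analysis.Analysis"
begin

definition loop_at :: "'a topology \<Rightarrow> 'a \<Rightarrow> (real \<Rightarrow> 'a) \<Rightarrow> bool" where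
  "loop_at X x g \<longleftrightarrow> pathin X g \<and> g 0 = x \<and> g 1 = x"

definition trivial_loop :: "'a topology \<Rightarrow> 'a \<Rightarrow> (real \<Rightarrow> 'a) \<Rightarrow> bool" where
  "trivial_loop X x g \<longleftrightarrow>
     homotopic_with (\<lambda>h. h 0 = x \<and> h 1 = x) (subtopology euclideanreal {0..1}) X g (\<lambda>t. x)"

text \<open>w(X): points at which X is not semilocally simply connected.\<close>
definition wild_set :: "'a topology \<Rightarrow> 'a set" where
  "wild_set X = {x \<in> topspace X. \<forall>U. openin X U \<and> x \<in> U \<longrightarrow>
      (\<exists>g. loop_at X x g \<and> g ` {0..1} \<subseteq> U \<and> \<not> trivial_loop X x g)}"

definition awild_set :: "'a topology \<Rightarrow> 'a set" where
  "awild_set X = {x \<in> topspace X. \<exists>\<alpha> :: nat \<Rightarrow> real \<Rightarrow> 'a.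
      (\<forall>n. loop_at X x (\<alpha> n) \<and> \<not> trivial_loop X x (\<alpha> n)) \<and>
      (\<forall>U. openin X U \<and> x \<in> U \<longrightarrow> (\<forall>\<^sub>F n in sequentially. \<alpha> n ` {0..1} \<subseteq> U))}"

end

theory Submission
  imports Defs
begin

text \<open>If \<open>g \<circ> f\<close> is homotopic to the identity, then \<open>f\<close> maps non-trivial loops to non-trivial
loops: the homotopy moves a loop \<open>\<alpha>\<close>, through loops, to \<open>g \<circ> f \<circ> \<alpha>\<close>, and a loop that is freely
homotopic (through loops) to a constant is already null-homotopic rel its basepoint. Hence \<open>f\<close>
maps \<open>w(X)\<close> into \<open>w(Y)\<close> and \<open>aw(X)\<close> into \<open>aw(Y)\<close>. Applied to the self-maps \<open>H(t, -)\<close> of a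
homotopy ending at the identity, this shows that the homotopies \<open>g \<circ> f \<simeq> id\<close> and \<open>f \<circ> g \<simeq> id\<close>
never leave these subspaces, so the homotopy equivalence restricts to them.\<close>

lemma trivial_loop_if_freely_null_homotopic:
  assumes \<alpha>: "loop_at X x \<alpha>"
    and free: "homotopic_with (\<lambda>h. h 0 = h 1) (top_of_set {0..1}) X \<alpha> (\<lambda>s. c)"
  shows "trivial_loop X x \<alpha>"
proof -
  obtain L :: "real \<times> real \<Rightarrow> 'a" where L: "continuous_map (top_of_set ({0..1} \<times> {0..1})) X L"
    and L0: "\<And>s. L (0, s) = \<alpha> s" and L1: "\<And>s. L (1, s) = c"
    and L_loop: "\<And>u. u \<in> {0..1} \<Longrightarrow> L (u, 0) = L (u, 1)"
    using free unfolding homotopic_with_def prod_topology_subtopology_eu by blast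
  define D :: "(real \<times> real) set" where "D = {0..1} \<times> {0..1}"
  define P where "P = L \<circ> (\<lambda>y::real \<times> real. (fst y, 0::real))"
  define side :: "real \<Rightarrow> real \<times> real" where "side = (\<lambda>s. (0, s))"
  \<comment> \<open>the other three sides of the square, from \<open>(0,0)\<close> to \<open>(0,1)\<close>; along them
      \<open>L\<close> agrees with \<open>P\<close>, which is constant along \<open>side\<close>\<close>
  define around :: "real \<Rightarrow> real \<times> real"
    where "around = (\<lambda>s. (min 1 (min (3 * s) (3 - 3 * s)), min 1 (max 0 (3 * s - 1))))"
  have x: "\<alpha> 0 = x" "\<alpha> 1 = x" using \<alpha> by (auto simp: loop_at_def)
  have P: "continuous_map (top_of_set D) X P"
  proof -
    have "continuous_map (top_of_set D) (top_of_set ({0..1} \<times> {0..1})) (\<lambda>y. (fst y, 0::real))"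
      by (auto simp: D_def continuous_map_in_subtopology intro!: continuous_intros)
    then show ?thesis unfolding P_def using L by (rule continuous_map_compose)
  qed
  have side_around: "homotopic_with (\<lambda>h. h 0 = (0, 0) \<and> h 1 = (0, 1)) (top_of_set {0..1}) (top_of_set D)
      side around"
  proof -
    have "homotopic_paths D side around"
    proof (rule homotopic_paths_linear)
      show "path side" "path around" unfolding side_def around_def path_def by (intro continuous_intros)+
      show "pathstart around = pathstart side" "pathfinish around = pathfinish side"
        by (auto simp: around_def side_def pathstart_def pathfinish_def)
      fix t :: real assume "t \<in> {0..1}"
      then have "side t \<in> D" "around t \<in> D" by (auto simp: side_def around_def D_def)
      moreover have "convex D" unfolding D_def by (intro convex_Times convex_real_interval)
      ultimately show "closed_segment (side t) (around t) \<subseteq> D" by (simp add: closed_segment_subset)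
    qed
    then show ?thesis by (simp add: homotopic_paths_def side_def pathstart_def pathfinish_def)
  qed
  have based: "homotopic_with (\<lambda>h. h 0 = x \<and> h 1 = x) (top_of_set {0..1}) X (F \<circ> side) (F \<circ> around)"
    if "continuous_map (top_of_set D) X F" "F (0, 0) = x" "F (0, 1) = x" for F
    using homotopic_with_compose_continuous_map_left[OF side_around that(1)] that(2,3) by simp
  have LPx: "L (0, 0) = x" "L (0, 1) = x" "P (0, 0) = x" "P (0, 1) = x" by (auto simp: L0 P_def x)
  have "homotopic_with (\<lambda>h. h 0 = x \<and> h 1 = x) (top_of_set {0..1}) X (L \<circ> around) (P \<circ> around)"
  proof (rule homotopic_with_equal)
    show "continuous_map (top_of_set {0..1}) X (L \<circ> around)"
      using based[OF L[folded D_def] LPx(1,2)] homotopic_with_imp_continuous_maps by blast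
    fix s :: real assume "s \<in> topspace (top_of_set {0..1})"
    then have "fst (around s) \<in> {0..1}" "fst (around s) = 1 \<or> snd (around s) = 0 \<or> snd (around s) = 1"
      by (auto simp: around_def min_def max_def)
    then show "(L \<circ> around) s = (P \<circ> around) s"
      using L_loop[of "fst (around s)"] L1[of 0] L1[of "snd (around s)"]
      by (cases "around s") (auto simp: P_def)
  qed (auto simp: around_def LPx)
  then have "homotopic_with (\<lambda>h. h 0 = x \<and> h 1 = x) (top_of_set {0..1}) X (L \<circ> side) (P \<circ> side)"
    using homotopic_with_trans[OF homotopic_with_trans[OF based[OF L[folded D_def] LPx(1,2)]]
        homotopic_with_symD[OF based[OF P LPx(3,4)]]] by blast
  moreover have "L \<circ> side = \<alpha>" "P \<circ> side = (\<lambda>s. x)" by (auto simp: side_def L0 P_def x)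
  ultimately show ?thesis by (simp add: trivial_loop_def)
qed

lemma trivial_loop_reflect:
  assumes f: "continuous_map X Y f" and g: "continuous_map Y X g"
    and gf: "homotopic_with (\<lambda>_. True) X X (g \<circ> f) id"
    and \<alpha>: "loop_at X x \<alpha>" and triv: "trivial_loop Y (f x) (f \<circ> \<alpha>)"
  shows "trivial_loop X x \<alpha>"
proof -
  have "continuous_map (top_of_set {0..1}) X \<alpha>" "\<alpha> 0 = \<alpha> 1"
    using \<alpha> by (auto simp: loop_at_def pathin_def)
  then have "homotopic_with (\<lambda>h. h 0 = h 1) (top_of_set {0..1}) X (g \<circ> f \<circ> \<alpha>) (id \<circ> \<alpha>)"
    by (intro homotopic_with_compose_continuous_map_right[OF gf]) auto
  then have "homotopic_with (\<lambda>h. h 0 = h 1) (top_of_set {0..1}) X \<alpha> (\<lambda>s. g (f (\<alpha> s)))"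
    by (simp add: homotopic_with_sym o_def)
  moreover have "homotopic_with (\<lambda>h. h 0 = h 1) (top_of_set {0..1}) X (g \<circ> (f \<circ> \<alpha>)) (g \<circ> (\<lambda>s. f x))"
    using triv unfolding trivial_loop_def
    by (rule homotopic_with_compose_continuous_map_left[OF _ g]) auto
  then have "homotopic_with (\<lambda>h. h 0 = h 1) (top_of_set {0..1}) X (\<lambda>s. g (f (\<alpha> s))) (\<lambda>s. g (f x))"
    by (simp add: o_def)
  ultimately have "homotopic_with (\<lambda>h. h 0 = h 1) (top_of_set {0..1}) X \<alpha> (\<lambda>s. g (f x))"
    by (rule homotopic_with_trans)
  then show ?thesis using \<alpha> by (rule trivial_loop_if_freely_null_homotopic[rotated])
qed

lemma loop_at_compose:
  "continuous_map X Y f \<Longrightarrow> loop_at X x \<alpha> \<Longrightarrow> loop_at Y (f x) (f \<circ> \<alpha>)"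
  unfolding loop_at_def by (auto intro: pathin_compose)

lemma wild_set_image_subset:
  assumes f: "continuous_map X Y f" and g: "continuous_map Y X g"
    and gf: "homotopic_with (\<lambda>_. True) X X (g \<circ> f) id"
  shows "f ` wild_set X \<subseteq> wild_set Y"
proof (rule image_subsetI)
  fix x assume x: "x \<in> wild_set X"
  then have "x \<in> topspace X" by (simp add: wild_set_def)
  then have fx: "f x \<in> topspace Y" using continuous_map_image_subset_topspace[OF f] by blast
  have "\<exists>\<beta>. loop_at Y (f x) \<beta> \<and> \<beta> ` {0..1} \<subseteq> U \<and> \<not> trivial_loop Y (f x) \<beta>"
    if U: "openin Y U" "f x \<in> U" for U
  proof -
    have "openin X {z \<in> topspace X. f z \<in> U}"
      using openin_continuous_map_preimage[OF f U(1)] .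
    with x U(2) obtain \<alpha> where \<alpha>: "loop_at X x \<alpha>" "\<alpha> ` {0..1} \<subseteq> {z \<in> topspace X. f z \<in> U}"
      and nontriv: "\<not> trivial_loop X x \<alpha>"
      unfolding wild_set_def by auto
    show ?thesis
    proof (intro exI conjI)
      show "loop_at Y (f x) (f \<circ> \<alpha>)" using f \<alpha>(1) by (rule loop_at_compose)
      show "(f \<circ> \<alpha>) ` {0..1} \<subseteq> U" using \<alpha>(2) by auto
      show "\<not> trivial_loop Y (f x) (f \<circ> \<alpha>)"
        using trivial_loop_reflect[OF f g gf \<alpha>(1)] nontriv by blast
    qed
  qed
  with fx show "f x \<in> wild_set Y" by (simp add: wild_set_def)
qed

lemma awild_set_image_subset:
  assumes f: "continuous_map X Y f" and g: "continuous_map Y X g"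
    and gf: "homotopic_with (\<lambda>_. True) X X (g \<circ> f) id"
  shows "f ` awild_set X \<subseteq> awild_set Y"
proof (rule image_subsetI)
  fix x assume "x \<in> awild_set X"
  then obtain \<alpha> :: "nat \<Rightarrow> real \<Rightarrow> _" where x: "x \<in> topspace X"
    and \<alpha>: "\<And>n. loop_at X x (\<alpha> n)" and nontriv: "\<And>n. \<not> trivial_loop X x (\<alpha> n)"
    and null: "\<And>V. openin X V \<Longrightarrow> x \<in> V \<Longrightarrow> \<forall>\<^sub>F n in sequentially. \<alpha> n ` {0..1} \<subseteq> V"
    unfolding awild_set_def by blast
  have "f x \<in> topspace Y" using continuous_map_image_subset_topspace[OF f] x by blast
  moreover have "loop_at Y (f x) (f \<circ> \<alpha> n) \<and> \<not> trivial_loop Y (f x) (f \<circ> \<alpha> n)" for n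
    using loop_at_compose[OF f \<alpha>] trivial_loop_reflect[OF f g gf \<alpha>] nontriv by blast
  moreover have "\<forall>\<^sub>F n in sequentially. (f \<circ> \<alpha> n) ` {0..1} \<subseteq> U" if "openin Y U \<and> f x \<in> U" for U
    using null[OF openin_continuous_map_preimage[OF f]] x that
    by (force elim!: eventually_mono)
  ultimately show "f x \<in> awild_set Y"
    unfolding awild_set_def by (intro CollectI conjI exI[of _ "\<lambda>n. f \<circ> \<alpha> n"] allI impI) auto
qed

lemma homotopic_with_slice_id:
  fixes t :: real
  assumes H: "continuous_map (prod_topology (top_of_set {0..1}) X) X H"
    and H1: "\<And>z. H (1, z) = z" and t: "t \<in> {0..1}"
  shows "homotopic_with (\<lambda>_. True) X X (\<lambda>z. H (t, z)) id"
  unfolding homotopic_with_def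
proof (intro exI conjI allI ballI)
  have "continuous_map (top_of_set {0..1}) (top_of_set {0..1}) (\<lambda>u. t + u * (1 - t))"
  proof -
    have "t + u * (1 - t) \<le> 1" if "u \<in> {0..1}" for u
      using that t mult_left_le_one_le[of "1 - t" u] by (auto simp: algebra_simps)
    then show ?thesis using t by (auto simp: continuous_map_in_subtopology intro!: continuous_intros)
  qed
  then have "continuous_map (prod_topology (top_of_set {0..1}) X) (prod_topology (top_of_set {0..1}) X)
      (\<lambda>(u, z). (t + u * (1 - t), z))"
    by (simp add: continuous_map_prod_top)
  then show "continuous_map (prod_topology (top_of_set {0..1}) X) X (\<lambda>(u, z). H (t + u * (1 - t), z))"
    using continuous_map_compose[OF _ H] by (simp add: o_def case_prod_unfold)
qed (auto simp: H1)

lemma homotopic_with_id_subtopology: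
  assumes hom: "homotopic_with (\<lambda>_. True) X X h id"
    and invariant: "\<And>k. homotopic_with (\<lambda>_. True) X X k id \<Longrightarrow> k ` A \<subseteq> A"
  shows "homotopic_with (\<lambda>_. True) (subtopology X A) (subtopology X A) h id"
proof -
  obtain H :: "real \<times> _ \<Rightarrow> _" where H: "continuous_map (prod_topology (top_of_set {0..1}) X) X H"
    and H0: "\<And>z. H (0, z) = h z" and H1: "\<And>z. H (1, z) = z"
    using hom unfolding homotopic_with_def by auto
  have HA: "H (t, z) \<in> A" if "t \<in> {0..1}" "z \<in> A" for t z
    using invariant[OF homotopic_with_slice_id[OF H H1 that(1)]] that(2) by blast
  show ?thesis
    unfolding homotopic_with_def
  proof (intro exI conjI allI ballI)
    show "continuous_map (prod_topology (top_of_set {0..1}) (subtopology X A)) (subtopology X A) H"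
      unfolding prod_topology_subtopology(2)
      by (auto simp: continuous_map_in_subtopology HA intro!: continuous_map_from_subtopology H)
  qed (auto simp: H0 H1)
qed

lemma homotopy_equivalent_space_subtopology:
  assumes f: "continuous_map X Y f" and g: "continuous_map Y X g"
    and gf: "homotopic_with (\<lambda>_. True) X X (g \<circ> f) id"
    and fg: "homotopic_with (\<lambda>_. True) Y Y (f \<circ> g) id"
    and fA: "f ` A \<subseteq> B" and gB: "g ` B \<subseteq> A"
    and invariant_A: "\<And>k. homotopic_with (\<lambda>_. True) X X k id \<Longrightarrow> k ` A \<subseteq> A"
    and invariant_B: "\<And>k. homotopic_with (\<lambda>_. True) Y Y k id \<Longrightarrow> k ` B \<subseteq> B"
  shows "subtopology X A homotopy_equivalent_space subtopology Y B"
  unfolding homotopy_equivalent_space_def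
proof (intro exI conjI)
  show "continuous_map (subtopology X A) (subtopology Y B) f"
    using fA by (auto simp: continuous_map_in_subtopology intro!: continuous_map_from_subtopology f)
  show "continuous_map (subtopology Y B) (subtopology X A) g"
    using gB by (auto simp: continuous_map_in_subtopology intro!: continuous_map_from_subtopology g)
  show "homotopic_with (\<lambda>_. True) (subtopology X A) (subtopology X A) (g \<circ> f) id"
    using gf invariant_A by (rule homotopic_with_id_subtopology)
  show "homotopic_with (\<lambda>_. True) (subtopology Y B) (subtopology Y B) (f \<circ> g) id"
    using fg invariant_B by (rule homotopic_with_id_subtopology)
qed

theorem mainTheorem6:
  fixes X :: "'a topology" and Y :: "'b topology"
  assumes "X homotopy_equivalent_space Y"
  shows "subtopology X (wild_set X) homotopy_equivalent_space subtopology Y (wild_set Y)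
       \<and> subtopology X (awild_set X) homotopy_equivalent_space subtopology Y (awild_set Y)"
proof -
  obtain f g where f: "continuous_map X Y f" and g: "continuous_map Y X g"
    and gf: "homotopic_with (\<lambda>_. True) X X (g \<circ> f) id"
    and fg: "homotopic_with (\<lambda>_. True) Y Y (f \<circ> g) id"
    using assms unfolding homotopy_equivalent_space_def by blast
  have wild_invariant: "k ` wild_set Z \<subseteq> wild_set Z"
    and awild_invariant: "k ` awild_set Z \<subseteq> awild_set Z"
    if "homotopic_with (\<lambda>_. True) Z Z k id" for Z :: "'c topology" and k
    using that wild_set_image_subset[of Z Z k id] awild_set_image_subset[of Z Z k id]
    by (auto dest: homotopic_with_imp_continuous_maps)
  show ?thesis
  proof
    show "subtopology X (wild_set X) homotopy_equivalent_space subtopology Y (wild_set Y)"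
      using f g gf fg wild_set_image_subset[OF f g gf] wild_set_image_subset[OF g f fg]
        wild_invariant wild_invariant
      by (rule homotopy_equivalent_space_subtopology)
    show "subtopology X (awild_set X) homotopy_equivalent_space subtopology Y (awild_set Y)"
      using f g gf fg awild_set_image_subset[OF f g gf] awild_set_image_subset[OF g f fg]
        awild_invariant awild_invariant
      by (rule homotopy_equivalent_space_subtopology)
  qed
qed

end
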